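(* In a snark $G$ with $\pi(G)\ge 5$, no apex is incident with a pair of parallel edges.
   Context: Graphs are finite; loops and multiple edges are allowed. A snark is a $2$-connected cubic graph with no proper $3$-edge-colouring. The perfect matching index $\pi(G)$ is the smallest number of perfect matchings of $G$ whose union is $E(G)$. Inflating a vertex $v$ to a triangle means deleting $v$, adding a triangle on three new vertices, and attaching the three edge-ends formerly incident with $v$ to the three distinct vertices of the triangle; the result is denoted $G^v$. A vertex $v$ of a snark $G$ is an apex if $\pi(G^v)=4$. *)

theory Defs
  imports Main "HOL-Library.Extended_Nat"
begin

text \<open>Finite multigraphs (loops and parallel edges allowed). Every edge e has two
ends, indexed by a boolean; endpt e b is the vertex at end b of e. A loop is an
edge whose two ends are the same vertex.\<close>

datatype ('v, 'e) mgraph = MGraph (verts: "'v set") (edges: "'e set") (endpt: "'e \<Rightarrow> bool \<Rightarrow> 'v")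

definition wf_graph :: "('v, 'e) mgraph \<Rightarrow> bool" where
  "wf_graph G \<longleftrightarrow> finite (verts G) \<and> finite (edges G) \<and>
     (\<forall>e\<in>edges G. \<forall>b. endpt G e b \<in> verts G)"

text \<open>Edge-ends (half-edges) at a vertex; a loop contributes two.\<close>
definition halfedges :: "('v, 'e) mgraph \<Rightarrow> 'v \<Rightarrow> ('e \<times> bool) set" where
  "halfedges G v = {(e, b). e \<in> edges G \<and> endpt G e b = v}"

definition degree :: "('v, 'e) mgraph \<Rightarrow> 'v \<Rightarrow> nat" where
  "degree G v = card (halfedges G v)"

definition cubic :: "('v, 'e) mgraph \<Rightarrow> bool" where
  "cubic G \<longleftrightarrow> (\<forall>v\<in>verts G. degree G v = 3)"

definition adj_in :: "('v, 'e) mgraph \<Rightarrow> 'v set \<Rightarrow> 'v \<Rightarrow> 'v \<Rightarrow> bool" where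
  "adj_in G S x y \<longleftrightarrow> x \<in> S \<and> y \<in> S \<and>
     (\<exists>e\<in>edges G. {endpt G e True, endpt G e False} = {x, y})"

definition connected_on :: "('v, 'e) mgraph \<Rightarrow> 'v set \<Rightarrow> bool" where
  "connected_on G S \<longleftrightarrow> S \<noteq> {} \<and> (\<forall>x\<in>S. \<forall>y\<in>S. (adj_in G S)\<^sup>*\<^sup>* x y)"

definition two_connected :: "('v, 'e) mgraph \<Rightarrow> bool" where
  "two_connected G \<longleftrightarrow> connected_on G (verts G) \<and>
     (\<forall>x\<in>verts G. connected_on G (verts G - {x}))"

text \<open>Proper 3-edge-colouring: edges sharing an end get distinct colours
(so a loop, which meets itself, cannot be coloured).\<close>
definition three_edge_colourable :: "('v, 'e) mgraph \<Rightarrow> bool" where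
  "three_edge_colourable G \<longleftrightarrow> (\<exists>c :: 'e \<Rightarrow> nat.
     (\<forall>e\<in>edges G. c e < 3) \<and>
     (\<forall>v\<in>verts G. inj_on (\<lambda>(e, b). c e) (halfedges G v)))"

definition snark :: "('v, 'e) mgraph \<Rightarrow> bool" where
  "snark G \<longleftrightarrow> wf_graph G \<and> two_connected G \<and> cubic G \<and> \<not> three_edge_colourable G"

definition perfect_matching :: "('v, 'e) mgraph \<Rightarrow> 'e set \<Rightarrow> bool" where
  "perfect_matching G M \<longleftrightarrow> M \<subseteq> edges G \<and>
     (\<forall>v\<in>verts G. card {(e, b). e \<in> M \<and> endpt G e b = v} = 1)"

text \<open>Perfect matching index (infinite if E(G) is not a union of perfect matchings).\<close>
definition pm_index :: "('v, 'e) mgraph \<Rightarrow> enat" where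
  "pm_index G = Inf {enat k | k. \<exists>\<M>. finite \<M> \<and> card \<M> = k \<and>
       (\<forall>M\<in>\<M>. perfect_matching G M) \<and> \<Union>\<M> = edges G}"

text \<open>Inflating v to a triangle, given an assignment f of the edge-ends at v to
the three triangle vertices Inr 0, Inr 1, Inr 2. Triangle edges are Inr 0, Inr 1,
Inr 2, where Inr i joins Inr i and Inr ((i+1) mod 3).\<close>
definition inflate_with :: "('v, 'e) mgraph \<Rightarrow> 'v \<Rightarrow> ('e \<times> bool \<Rightarrow> nat) \<Rightarrow> ('v + nat, 'e + nat) mgraph" where
  "inflate_with G v f = MGraph
     (Inl ` (verts G - {v}) \<union> Inr ` {0, 1, 2})
     (Inl ` edges G \<union> Inr ` {0, 1, 2})
     (\<lambda>x b. case x of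
        Inl e \<Rightarrow> (if endpt G e b = v then Inr (f (e, b)) else Inl (endpt G e b))
      | Inr i \<Rightarrow> (if b then Inr i else Inr ((i + 1) mod 3)))"

text \<open>G^v: the three edge-ends at v attached to distinct triangle vertices
(via some bijection; all choices give isomorphic graphs).\<close>
definition inflate :: "('v, 'e) mgraph \<Rightarrow> 'v \<Rightarrow> ('v + nat, 'e + nat) mgraph" where
  "inflate G v = inflate_with G v (SOME f. bij_betw f (halfedges G v) {0, 1, 2})"

definition apex :: "('v, 'e) mgraph \<Rightarrow> 'v \<Rightarrow> bool" where
  "apex G v \<longleftrightarrow> v \<in> verts G \<and> pm_index (inflate G v) = 4"

definition parallel :: "('v, 'e) mgraph \<Rightarrow> 'e \<Rightarrow> 'e \<Rightarrow> bool" where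
  "parallel G e1 e2 \<longleftrightarrow> e1 \<in> edges G \<and> e2 \<in> edges G \<and> e1 \<noteq> e2 \<and>
     {endpt G e1 True, endpt G e1 False} = {endpt G e2 True, endpt G e2 False}"

definition incident :: "('v, 'e) mgraph \<Rightarrow> 'v \<Rightarrow> 'e \<Rightarrow> bool" where
  "incident G v e \<longleftrightarrow> e \<in> edges G \<and> (endpt G e True = v \<or> endpt G e False = v)"

end

theory Submission
  imports Defs
begin

(*
  A perfect matching of G^v contains either one triangle edge, and then exactly one of
  the three edges at v, or no triangle edge, and then all three of them. If two edges
  at v are parallel, the second case would cover their common other end twice. So
  every perfect matching of G^v restricts to a perfect matching of G, and four
  perfect matchings covering G^v restrict to four covering G: pi(G) <= 4.
*)

lemma perfect_matching_iff_halfedges: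
  "perfect_matching G M \<longleftrightarrow>
     M \<subseteq> edges G \<and> (\<forall>w\<in>verts G. card {h \<in> halfedges G w. fst h \<in> M} = 1)"
proof -
  have "M \<subseteq> edges G \<Longrightarrow> {(e, b). e \<in> M \<and> endpt G e b = w} = {h \<in> halfedges G w. fst h \<in> M}" for w
    by (auto simp: halfedges_def)
  then show ?thesis
    unfolding perfect_matching_def by auto
qed

lemma pm_index_le_card:
  assumes "finite \<M>" "\<forall>M\<in>\<M>. perfect_matching G M" "\<Union>\<M> = edges G"
  shows "pm_index G \<le> card \<M>"
  unfolding pm_index_def using assms by (auto intro: Inf_lower)

lemma pm_index_attained:
  assumes "pm_index G \<noteq> \<infinity>"
  obtains \<M> where "finite \<M>" "pm_index G = card \<M>"
    "\<forall>M\<in>\<M>. perfect_matching G M" "\<Union>\<M> = edges G"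
proof -
  let ?S = "{enat k | k. \<exists>\<M>. finite \<M> \<and> card \<M> = k \<and>
       (\<forall>M\<in>\<M>. perfect_matching G M) \<and> \<Union>\<M> = edges G}"
  have "?S \<noteq> {}"
    using assms unfolding pm_index_def by (metis Inf_empty top_enat_def)
  then have "Inf ?S \<in> ?S"
    by (meson ex_in_conv wellorder_InfI)
  then show ?thesis
    using that unfolding pm_index_def by auto
qed

lemma pm_index_le_of_preimage:
  assumes pm: "\<And>M. perfect_matching G' M \<Longrightarrow> perfect_matching G (g -` M)"
    and edges: "g ` edges G \<subseteq> edges G'"
  shows "pm_index G \<le> pm_index G'"
proof (cases "pm_index G' = \<infinity>")
  case False
  then obtain \<M> where fin: "finite \<M>" and card: "pm_index G' = card \<M>"
    and pms: "\<forall>M\<in>\<M>. perfect_matching G' M" and cover: "\<Union>\<M> = edges G'"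
    by (rule pm_index_attained)
  define \<N> where "\<N> = (\<lambda>M. g -` M) ` \<M>"
  have "\<forall>N\<in>\<N>. perfect_matching G N"
    using pm pms unfolding \<N>_def by blast
  moreover have "\<Union>\<N> = edges G"
  proof
    show "\<Union>\<N> \<subseteq> edges G"
      using \<open>\<forall>N\<in>\<N>. perfect_matching G N\<close> unfolding perfect_matching_def by blast
    show "edges G \<subseteq> \<Union>\<N>"
      using edges cover unfolding \<N>_def by blast
  qed
  ultimately have "pm_index G \<le> card \<N>"
    using fin unfolding \<N>_def by (intro pm_index_le_card) auto
  also have "\<dots> \<le> card \<M>"
    unfolding \<N>_def using fin by (simp add: card_image_le)
  finally show ?thesis
    using card by simp
qed simp

lemma halfedges_cubic:
  assumes "wf_graph G" "cubic G" "v \<in> verts G"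
  shows "finite (halfedges G v)" "card (halfedges G v) = 3"
proof -
  have "halfedges G v \<subseteq> edges G \<times> UNIV"
    unfolding halfedges_def by auto
  moreover have "finite (edges G \<times> (UNIV :: bool set))"
    using assms(1) unfolding wf_graph_def by simp
  ultimately show "finite (halfedges G v)"
    by (rule finite_subset)
  show "card (halfedges G v) = 3"
    using assms(2,3) unfolding cubic_def degree_def by simp
qed

lemma inflate_eq_inflate_with:
  assumes "wf_graph G" "cubic G" "v \<in> verts G"
  obtains f where "bij_betw f (halfedges G v) {0, 1, 2}" "inflate G v = inflate_with G v f"
proof -
  have "\<exists>f. bij_betw f (halfedges G v) {0, 1, 2 :: nat}"
    using halfedges_cubic[OF assms] by (intro finite_same_card_bij) auto
  then show ?thesis
    using that unfolding inflate_def by (metis someI_ex)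
qed

definition exactly_one :: "bool \<Rightarrow> bool \<Rightarrow> bool \<Rightarrow> bool" where
  "exactly_one p q r \<longleftrightarrow> (p \<and> \<not> q \<and> \<not> r) \<or> (\<not> p \<and> q \<and> \<not> r) \<or> (\<not> p \<and> \<not> q \<and> r)"

lemma card_filter_three_eq_1:
  assumes "distinct [a, b, c]"
  shows "card {x \<in> {a, b, c}. P x} = 1 \<longleftrightarrow> exactly_one (P a) (P b) (P c)"
proof -
  have filter: "{x \<in> {a, b, c}. P x} =
      (if P a then {a} else {}) \<union> (if P b then {b} else {}) \<union> (if P c then {c} else {})"
    by auto
  show ?thesis
    unfolding filter exactly_one_def using assms
    by (cases "P a"; cases "P b"; cases "P c") (auto simp: card_insert_if)
qed

lemma halfedges_inflate_with_Inl:
  fixes G :: "('v, 'e) mgraph"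
  assumes "w \<noteq> v"
  shows "halfedges (inflate_with G v f) (Inl w) = apfst Inl ` halfedges G w"
proof (intro set_eqI iffI)
  fix x
  assume x: "x \<in> halfedges (inflate_with G v f) (Inl w)"
  then obtain e where "fst x = Inl e"
    unfolding halfedges_def inflate_with_def by (cases "fst x") (auto split: prod.splits if_splits)
  with x show "x \<in> apfst Inl ` halfedges G w"
    unfolding halfedges_def inflate_with_def
    by (auto simp: image_iff apfst_def map_prod_def split: if_splits prod.splits)
next
  fix x :: "('e + nat) \<times> bool"
  assume "x \<in> apfst Inl ` halfedges G w"
  then show "x \<in> halfedges (inflate_with G v f) (Inl w)"
    using assms unfolding halfedges_def inflate_with_def by auto
qed

lemma halfedges_inflate_with_Inr:
  fixes G :: "('v, 'e) mgraph"
  assumes bij: "bij_betw f (halfedges G v) {0, 1, 2}" and h: "h \<in> halfedges G v" "f h = i"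
  shows "halfedges (inflate_with G v f) (Inr i) =
    {apfst Inl h, (Inr i, True), (Inr ((i + 2) mod 3), False)}"
proof (intro set_eqI iffI)
  have "i < 3"
    using bij_betw_apply[OF bij h(1)] h(2) by auto
  fix x :: "('e + nat) \<times> bool"
  {
    assume x: "x \<in> halfedges (inflate_with G v f) (Inr i)"
    show "x \<in> {apfst Inl h, (Inr i, True), (Inr ((i + 2) mod 3), False)}"
    proof (cases x)
      case (Pair y b)
      show ?thesis
      proof (cases y)
        case (Inl e)
        with x Pair have "(e, b) \<in> halfedges G v" "f (e, b) = i"
          unfolding halfedges_def inflate_with_def by (auto split: if_splits)
        then have "(e, b) = h"
          using bij h unfolding bij_betw_def by (metis inj_onD)
        with Pair Inl show ?thesis
          by auto
      next
        case (Inr j)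
        with x Pair have "j < 3" "if b then j = i else (j + 1) mod 3 = i"
          unfolding halfedges_def inflate_with_def by auto
        moreover from \<open>j < 3\<close> have "j = 0 \<or> j = 1 \<or> j = 2"
          by auto
        ultimately have "if b then j = i else j = (i + 2) mod 3"
          by (cases b) auto
        with Pair Inr show ?thesis
          by (auto split: if_splits)
      qed
    qed
  }
  assume "x \<in> {apfst Inl h, (Inr i, True), (Inr ((i + 2) mod 3), False)}"
  with h \<open>i < 3\<close> show "x \<in> halfedges (inflate_with G v f) (Inr i)"
    unfolding halfedges_def inflate_with_def by (auto simp: mod_Suc)
qed

lemma perfect_matching_inflate_with_Inl_vertex:
  assumes pm: "perfect_matching (inflate_with G v f) M" and w: "w \<in> verts G" "w \<noteq> v"
  shows "card {h \<in> halfedges G w. Inl (fst h) \<in> M} = 1"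
proof -
  have "Inl w \<in> verts (inflate_with G v f)"
    using w unfolding inflate_with_def by simp
  with pm have "card {x \<in> halfedges (inflate_with G v f) (Inl w). fst x \<in> M} = 1"
    unfolding perfect_matching_iff_halfedges by blast
  moreover have "{x \<in> halfedges (inflate_with G v f) (Inl w). fst x \<in> M} =
      apfst Inl ` {h \<in> halfedges G w. Inl (fst h) \<in> M}"
    unfolding halfedges_inflate_with_Inl[OF w(2)] by force
  ultimately show ?thesis
    by (simp add: card_image inj_on_subset[OF inj_apfst[THEN iffD2, OF inj_Inl]])
qed

lemma perfect_matching_inflate_with_Inr_vertex:
  assumes bij: "bij_betw f (halfedges G v) {0, 1, 2}"
    and pm: "perfect_matching (inflate_with G v f) M"
    and h: "h \<in> halfedges G v" "f h = i"
  shows "exactly_one (Inl (fst h) \<in> M) (Inr i \<in> M) (Inr ((i + 2) mod 3) \<in> M)"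
proof -
  have "Inr i \<in> verts (inflate_with G v f)"
    using bij_betw_apply[OF bij h(1)] h(2) unfolding inflate_with_def by auto
  with pm have "card {x \<in> halfedges (inflate_with G v f) (Inr i). fst x \<in> M} = 1"
    unfolding perfect_matching_iff_halfedges by blast
  then have "card {x \<in> {apfst Inl h, (Inr i, True), (Inr ((i + 2) mod 3), False)}. fst x \<in> M} = 1"
    by (simp only: halfedges_inflate_with_Inr[OF bij h])
  then have "exactly_one (fst (apfst Inl h) \<in> M) (fst (Inr i, True) \<in> M)
      (fst (Inr ((i + 2) mod 3), False) \<in> M)"
    by (rule card_filter_three_eq_1[THEN iffD1, rotated]) (cases h, simp)
  then show ?thesis
    by simp
qed

lemma perfect_matching_inflate_with_inflated_vertex:
  assumes bij: "bij_betw f (halfedges G v) {0, 1, 2}"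
    and pm: "perfect_matching (inflate_with G v f) M"
  shows "card {h \<in> halfedges G v. Inl (fst h) \<in> M} = 1 \<or> (\<forall>h\<in>halfedges G v. Inl (fst h) \<in> M)"
proof -
  define h where "h = inv_into (halfedges G v) f"
  have h_bij: "bij_betw h {0, 1, 2} (halfedges G v)"
    unfolding h_def by (rule bij_betw_inv_into[OF bij])
  have f_h: "f (h i) = i" if "i \<in> {0, 1, 2}" for i
    unfolding h_def using bij that by (simp add: bij_betw_def f_inv_into_f)
  have H: "halfedges G v = {h 0, h 1, h 2}"
    using bij_betw_imp_surj_on[OF h_bij] by simp
  have "f (h 0) = 0" "f (h 1) = 1" "f (h 2) = 2"
    using f_h by simp_all
  then have "distinct [h 0, h 1, h 2]"
    by (auto dest: arg_cong[where f = f])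
  have triangle: "exactly_one (Inl (fst (h i)) \<in> M) (Inr i \<in> M) (Inr ((i + 2) mod 3) \<in> M)"
    if "i \<in> {0, 1, 2}" for i
    using perfect_matching_inflate_with_Inr_vertex[OF bij pm bij_betw_apply[OF h_bij that] f_h[OF that]] .
  have "exactly_one (Inl (fst (h 0)) \<in> M) (Inr 0 \<in> M) (Inr 2 \<in> M)"
    and "exactly_one (Inl (fst (h 1)) \<in> M) (Inr 1 \<in> M) (Inr 0 \<in> M)"
    and "exactly_one (Inl (fst (h 2)) \<in> M) (Inr 2 \<in> M) (Inr 1 \<in> M)"
    using triangle[of 0] triangle[of 1] triangle[of 2] by (simp_all add: numeral_2_eq_2)
  \<comment> \<open>The triangle edges in M cover an even number of triangle vertices, so one or three outer edges are matched.\<close>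
  then have "exactly_one (Inl (fst (h 0)) \<in> M) (Inl (fst (h 1)) \<in> M) (Inl (fst (h 2)) \<in> M) \<or>
      (Inl (fst (h 0)) \<in> M \<and> Inl (fst (h 1)) \<in> M \<and> Inl (fst (h 2)) \<in> M)"
    unfolding exactly_one_def by argo
  then show ?thesis
    unfolding H using card_filter_three_eq_1[OF \<open>distinct [h 0, h 1, h 2]\<close>, of "\<lambda>x. Inl (fst x) \<in> M"]
    by auto
qed

lemma parallel_other_end:
  assumes "finite (halfedges G v)" "card (halfedges G v) \<le> 3"
    and par: "parallel G e1 e2" and inc: "incident G v e1"
  obtains u b1 b2 where "u \<noteq> v" "endpt G e1 b1 = u" "endpt G e2 b2 = u"
proof -
  obtain b where b: "endpt G e1 b = v"
    using inc unfolding incident_def by blast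
  have ends: "{endpt G e1 True, endpt G e1 False} = {endpt G e2 True, endpt G e2 False}"
    and "e1 \<noteq> e2" "e1 \<in> edges G" "e2 \<in> edges G"
    using par unfolding parallel_def by auto
  show ?thesis
  proof (cases "endpt G e1 (\<not> b) = v")
    case True
    \<comment> \<open>Two parallel loops at v would give v degree at least four.\<close>
    with b have "endpt G e1 True = v" "endpt G e1 False = v"
      by (cases b; simp)+
    with ends have "{endpt G e2 True, endpt G e2 False} = {v}"
      by simp
    then have "endpt G e2 True = v" "endpt G e2 False = v"
      by blast+
    with \<open>endpt G e1 True = v\<close> \<open>endpt G e1 False = v\<close> \<open>e1 \<in> edges G\<close> \<open>e2 \<in> edges G\<close>
    have "{(e1, True), (e1, False), (e2, True), (e2, False)} \<subseteq> halfedges G v"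
      unfolding halfedges_def by auto
    then have "card {(e1, True), (e1, False), (e2, True), (e2, False)} \<le> 3"
      using assms(1,2) by (meson card_mono le_trans)
    with \<open>e1 \<noteq> e2\<close> show ?thesis
      by simp
  next
    case False
    moreover have "endpt G e1 (\<not> b) \<in> {endpt G e2 True, endpt G e2 False}"
      using ends by (cases b) auto
    ultimately show ?thesis
      using that by auto
  qed
qed

lemma parallel_incident:
  assumes "parallel G e1 e2" "incident G v e1"
  shows "incident G v e2"
proof -
  have "v \<in> {endpt G e1 True, endpt G e1 False}"
    using assms(2) unfolding incident_def by auto
  then show ?thesis
    using assms(1) unfolding parallel_def incident_def by auto
qed

lemma perfect_matching_inflate_with_not_all_parallel:
  assumes wf: "wf_graph G"
    and bij: "bij_betw f (halfedges G v) {0, 1, 2}"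
    and pm: "perfect_matching (inflate_with G v f) M"
    and par: "parallel G e1 e2" and inc: "incident G v e1"
  shows "\<not> (\<forall>h\<in>halfedges G v. Inl (fst h) \<in> M)"
proof
  assume all: "\<forall>h\<in>halfedges G v. Inl (fst h) \<in> M"
  have "finite (halfedges G v)" "card (halfedges G v) = 3"
    using bij_betw_finite[OF bij] bij_betw_same_card[OF bij] by simp_all
  then obtain u b1 b2 where u: "u \<noteq> v" "endpt G e1 b1 = u" "endpt G e2 b2 = u"
    using parallel_other_end[OF _ _ par inc] by (metis order_refl)
  from inc parallel_incident[OF par inc] all have "Inl e1 \<in> M" "Inl e2 \<in> M"
    unfolding incident_def halfedges_def by fastforce+
  moreover have "u \<in> verts G" "e1 \<in> edges G" "e2 \<in> edges G" "e1 \<noteq> e2"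
    using wf par u(2) unfolding wf_graph_def parallel_def by auto
  ultimately have "{(e1, b1), (e2, b2)} \<subseteq> {h \<in> halfedges G u. Inl (fst h) \<in> M}"
    using u(2,3) unfolding halfedges_def by simp
  moreover have "card {h \<in> halfedges G u. Inl (fst h) \<in> M} = 1"
    using perfect_matching_inflate_with_Inl_vertex[OF pm \<open>u \<in> verts G\<close> u(1)] .
  then obtain z where "{h \<in> halfedges G u. Inl (fst h) \<in> M} = {z}"
    by (rule card_1_singletonE)
  ultimately show False
    using \<open>e1 \<noteq> e2\<close> by auto
qed

lemma perfect_matching_preimage_inflate_with:
  assumes wf: "wf_graph G"
    and bij: "bij_betw f (halfedges G v) {0, 1, 2}"
    and pm: "perfect_matching (inflate_with G v f) M"
    and par: "parallel G e1 e2" and inc: "incident G v e1"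
  shows "perfect_matching G (Inl -` M)"
proof -
  have "card {h \<in> halfedges G w. Inl (fst h) \<in> M} = 1" if "w \<in> verts G" for w
    using perfect_matching_inflate_with_inflated_vertex[OF bij pm]
      perfect_matching_inflate_with_not_all_parallel[OF assms]
      perfect_matching_inflate_with_Inl_vertex[OF pm that] by (cases "w = v") auto
  moreover have "Inl -` M \<subseteq> edges G"
    using pm unfolding perfect_matching_def inflate_with_def by auto
  ultimately show ?thesis
    unfolding perfect_matching_iff_halfedges by simp
qed

lemma pm_index_le_inflate_parallel:
  assumes "wf_graph G" "cubic G" "v \<in> verts G"
    and "parallel G e1 e2" "incident G v e1"
  shows "pm_index G \<le> pm_index (inflate G v)"
proof -
  obtain f where bij: "bij_betw f (halfedges G v) {0, 1, 2}"
    and inflate: "inflate G v = inflate_with G v f"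
    using inflate_eq_inflate_with[OF assms(1-3)] .
  show ?thesis
    unfolding inflate
  proof (rule pm_index_le_of_preimage)
    show "perfect_matching G (Inl -` M)" if "perfect_matching (inflate_with G v f) M" for M
      using perfect_matching_preimage_inflate_with[OF assms(1) bij that assms(4,5)] .
    show "Inl ` edges G \<subseteq> edges (inflate_with G v f)"
      unfolding inflate_with_def by auto
  qed
qed

theorem lemma6p5:
  fixes G :: "('v, 'e) mgraph"
  assumes "snark G" and "pm_index G \<ge> 5" and "apex G v"
  shows "\<not> (\<exists>e1 e2. parallel G e1 e2 \<and> incident G v e1 \<and> incident G v e2)"
proof
  assume "\<exists>e1 e2. parallel G e1 e2 \<and> incident G v e1 \<and> incident G v e2"
  then obtain e1 e2 where "parallel G e1 e2" "incident G v e1"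
    by blast
  moreover have "wf_graph G" "cubic G"
    using assms(1) unfolding snark_def by simp_all
  moreover have "v \<in> verts G" "pm_index (inflate G v) = 4"
    using assms(3) unfolding apex_def by simp_all
  ultimately have "pm_index G \<le> 4"
    using pm_index_le_inflate_parallel by metis
  with assms(2) have "(5 :: enat) \<le> 4"
    by (rule order_trans)
  then show False
    by (simp add: numeral_eq_enat)
qed

end
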